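(* Let $t\ge 1$ and let $K_{2*t}$ denote the complete multipartite graph with $t$ parts each of size $2$. If $G$ is a subgraph of $K_{2*t}$, then $G$ is $f$-AT for the constant function $f\equiv t$. Consequently, if $G$ is BK-free, then $G$ is not a subgraph of $K_{2*(\Delta(G)-1)}$.
   Context: For a graph $G$ and $f:V(G)\to\mathbb{Z}^+$, an orientation $D$ of $E(G)$ is an Alon--Tarsi orientation for $f$ if $d^+_D(v)<f(v)$ for every vertex $v$ and the number of spanning Eulerian subgraphs of $D$ (spanning subdigraphs in which every vertex has equal in- and out-degree) with an even number of edges differs from the number with an odd number of edges; $G$ is $f$-AT if such an orientation exists. A digraph (in which some edges may be oriented in both directions) is kernel-perfect if every induced subdigraph $D'$ has a kernel, i.e., a set $I\subseteq V(D')$ with no arc between two of its vertices such that every vertex of $D'$ not in $I$ has an out-neighbor in $I$. A graph $H$ is $f$-KP if some supergraph $H'$ of $H$ on the same vertex set (possibly with parallel edges) has a kernel-perfect orientation with $d^+(v)<f(v)$ for all $v$. A connected graph $G$ is BK-free if it has no induced subgraph $H$ that is $f_H$-AT or $f_H$-KP, where $f_H(v)=d_H(v)-1+\Delta(G)-d_G(v)$ for $v\in V(H)$. *)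

theory Defs
  imports Main
begin

definition graph :: "'a set \<Rightarrow> 'a set set \<Rightarrow> bool" where
  "graph V E \<longleftrightarrow> finite V \<and> (\<forall>e\<in>E. \<exists>u v. e = {u, v} \<and> u \<noteq> v \<and> u \<in> V \<and> v \<in> V)"

definition degree :: "'a set set \<Rightarrow> 'a \<Rightarrow> nat" where
  "degree E v = card {e \<in> E. v \<in> e}"

definition maxdeg :: "'a set \<Rightarrow> 'a set set \<Rightarrow> nat" where
  "maxdeg V E = Max (degree E ` V)"

definition connected_graph :: "'a set \<Rightarrow> 'a set set \<Rightarrow> bool" where
  "connected_graph V E \<longleftrightarrow> V \<noteq> {} \<and>
     (\<forall>u\<in>V. \<forall>v\<in>V. (u, v) \<in> {(x, y). {x, y} \<in> E}\<^sup>*)"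

definition induced_edges :: "'a set set \<Rightarrow> 'a set \<Rightarrow> 'a set set" where
  "induced_edges E W = {e \<in> E. e \<subseteq> W}"

definition orientation :: "'a set set \<Rightarrow> ('a \<times> 'a) set \<Rightarrow> bool" where
  "orientation E D \<longleftrightarrow>
     (\<forall>u v. (u, v) \<in> D \<longrightarrow> {u, v} \<in> E \<and> (v, u) \<notin> D) \<and>
     (\<forall>u v. {u, v} \<in> E \<longrightarrow> (u, v) \<in> D \<or> (v, u) \<in> D)"

definition outdeg :: "('a \<times> 'a) set \<Rightarrow> 'a \<Rightarrow> nat" where
  "outdeg D v = card {w. (v, w) \<in> D}"

definition indeg :: "('a \<times> 'a) set \<Rightarrow> 'a \<Rightarrow> nat" where
  "indeg D v = card {w. (w, v) \<in> D}"

definition eulerian_sub :: "('a \<times> 'a) set \<Rightarrow> ('a \<times> 'a) set \<Rightarrow> bool" where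
  "eulerian_sub D S \<longleftrightarrow> S \<subseteq> D \<and> (\<forall>v. indeg S v = outdeg S v)"

definition AT_orientation :: "'a set \<Rightarrow> 'a set set \<Rightarrow> ('a \<Rightarrow> int) \<Rightarrow> ('a \<times> 'a) set \<Rightarrow> bool" where
  "AT_orientation V E f D \<longleftrightarrow> orientation E D \<and>
     (\<forall>v\<in>V. int (outdeg D v) < f v) \<and>
     card {S. eulerian_sub D S \<and> even (card S)} \<noteq> card {S. eulerian_sub D S \<and> odd (card S)}"

definition f_AT :: "'a set \<Rightarrow> 'a set set \<Rightarrow> ('a \<Rightarrow> int) \<Rightarrow> bool" where
  "f_AT V E f \<longleftrightarrow> (\<exists>D. AT_orientation V E f D)"

definition kernel_perfect :: "'a set \<Rightarrow> ('a \<Rightarrow> 'a \<Rightarrow> bool) \<Rightarrow> bool" where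
  "kernel_perfect V A \<longleftrightarrow>
     (\<forall>W \<subseteq> V. \<exists>I \<subseteq> W. (\<forall>x\<in>I. \<forall>y\<in>I. \<not> A x y) \<and> (\<forall>w \<in> W - I. \<exists>i\<in>I. A w i))"

text \<open>f-KP: an orientation (edges possibly oriented both ways) of a multigraph supergraph H'
  of (V,E) on the same vertex set, encoded by arc multiplicities c u v (number of arcs u to v).
  Every edge of E occurs in H', so receives at least one arc; out-degree counts multiplicities.\<close>
definition f_KP :: "'a set \<Rightarrow> 'a set set \<Rightarrow> ('a \<Rightarrow> int) \<Rightarrow> bool" where
  "f_KP V E f \<longleftrightarrow> (\<exists>c :: 'a \<Rightarrow> 'a \<Rightarrow> nat.
     (\<forall>u v. 0 < c u v \<longrightarrow> u \<in> V \<and> v \<in> V \<and> u \<noteq> v) \<and>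
     (\<forall>u v. {u, v} \<in> E \<longrightarrow> 1 \<le> c u v + c v u) \<and>
     kernel_perfect V (\<lambda>u v. 0 < c u v) \<and>
     (\<forall>v\<in>V. int (\<Sum>w\<in>V. c v w) < f v))"

definition BK_free :: "'a set \<Rightarrow> 'a set set \<Rightarrow> bool" where
  "BK_free V E \<longleftrightarrow> connected_graph V E \<and>
     \<not> (\<exists>W. W \<subseteq> V \<and> W \<noteq> {} \<and>
          (let EH = induced_edges E W;
               fH = (\<lambda>v. int (degree EH v) - 1 + int (maxdeg V E) - int (degree E v))
           in f_AT W EH fH \<or> f_KP W EH fH))"

text \<open>(V,E) is (isomorphic to) a subgraph of K_{2*t}, the complete t-partite graph
  with parts {i} x {0,1}.\<close>
definition subgraph_K2t :: "'a set \<Rightarrow> 'a set set \<Rightarrow> nat \<Rightarrow> bool" where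
  "subgraph_K2t V E t \<longleftrightarrow> (\<exists>\<phi> :: 'a \<Rightarrow> nat \<times> nat.
     inj_on \<phi> V \<and> \<phi> ` V \<subseteq> {0..<t} \<times> {0..<2} \<and>
     (\<forall>u v. {u, v} \<in> E \<longrightarrow> fst (\<phi> u) \<noteq> fst (\<phi> v)))"

end

theory Submission
  imports Defs "HOL-Library.FuncSet" "HOL-Computational_Algebra.Polynomial"
begin

text \<open>
  By the Alon-Tarsi expansion, the coefficient of the monomial with exponents d in the graph
  polynomial of K_{2*t} is a signed count of the orientations with out-degrees d, and the
  coefficient formula of the Combinatorial Nullstellensatz expresses it as a weighted sum over
  the grid {0..t-1}^V. For d = t - 1 only proper t-colourings contribute; these are constant on
  the parts, so every nonzero term is a quotient of two squares and the sum is positive.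
  Grouping the orientations by their arcs outside a subgraph F shows that a nonzero coefficient
  yields an orientation of F with out-degrees below t whose even and odd Eulerian subgraphs
  differ in number, which is an Alon-Tarsi orientation for the constant t. Any subgraph of
  K_{2*t} is reached this way after relabelling its vertices. Finally, a BK-free graph G
  is not f_H-AT for H = G, and f_G is the constant Delta(G) - 1.
\<close>

section \<open>Orientations\<close>

lemma graph_edgeD:
  assumes "graph V E" "{u, v} \<in> E"
  shows "u \<in> V" "v \<in> V" "u \<noteq> v"
  using assms unfolding graph_def by (metis doubleton_eq_iff)+

lemma graph_edge_subset:
  assumes "graph V E" "e \<in> E"
  shows "e \<subseteq> V"
proof -
  obtain u v where "e = {u, v}" "u \<in> V" "v \<in> V" using assms unfolding graph_def by blast
  then show ?thesis by simp
qed

lemma orientation_antisym: "orientation E D \<Longrightarrow> (u, v) \<in> D \<Longrightarrow> (v, u) \<notin> D"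
  unfolding orientation_def by auto

lemma orientation_arc_edge: "orientation E D \<Longrightarrow> (u, v) \<in> D \<Longrightarrow> {u, v} \<in> E"
  unfolding orientation_def by auto

lemma orientation_covers: "orientation E D \<Longrightarrow> {u, v} \<in> E \<Longrightarrow> (u, v) \<in> D \<or> (v, u) \<in> D"
  unfolding orientation_def by auto

lemma orientation_subset:
  assumes "graph V E" "orientation E D"
  shows "D \<subseteq> V \<times> V"
proof
  fix p assume "p \<in> D"
  then obtain u v where "p = (u, v)" "{u, v} \<in> E"
    using orientation_arc_edge[OF assms(2)] by (cases p) blast
  then show "p \<in> V \<times> V" using graph_edgeD[OF assms(1)] by blast
qed

lemma finite_orientation:
  assumes "graph V E" "orientation E D"
  shows "finite D"
  using finite_subset[OF orientation_subset[OF assms]] assms(1) unfolding graph_def by simp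

lemma finite_orientations:
  assumes "graph V E"
  shows "finite {D. orientation E D}"
proof (rule finite_subset)
  show "{D. orientation E D} \<subseteq> Pow (V \<times> V)" using orientation_subset[OF assms] by blast
  show "finite (Pow (V \<times> V))" using assms unfolding graph_def by simp
qed

lemma card_orientation:
  assumes "graph V E" "orientation E D"
  shows "card D = card E"
proof -
  have "inj_on (\<lambda>(u, v). {u, v}) D"
  proof (rule inj_onI, clarify)
    fix a b c d assume "(a, b) \<in> D" "(c, d) \<in> D" "{a, b} = {c, d}"
    then show "a = c \<and> b = d" using orientation_antisym[OF assms(2)] by (metis doubleton_eq_iff)
  qed
  moreover have "(\<lambda>(u, v). {u, v}) ` D = E"
  proof
    show "(\<lambda>(u, v). {u, v}) ` D \<subseteq> E" using orientation_arc_edge[OF assms(2)] by auto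
    show "E \<subseteq> (\<lambda>(u, v). {u, v}) ` D"
    proof
      fix e assume "e \<in> E"
      then obtain u v where e: "e = {u, v}" using assms(1) unfolding graph_def by blast
      then have "(u, v) \<in> D \<or> (v, u) \<in> D" using orientation_covers[OF assms(2)] \<open>e \<in> E\<close> by blast
      then show "e \<in> (\<lambda>(u, v). {u, v}) ` D" using e by (auto simp: insert_commute intro: image_eqI)
    qed
  qed
  ultimately show ?thesis using card_image by fastforce
qed

lemma finite_out_neighbours: "finite D \<Longrightarrow> finite {w. (v, w) \<in> D}"
  using finite_Image[of D "{v}"] by (simp add: Image_singleton)

lemma finite_in_neighbours: "finite D \<Longrightarrow> finite {w. (w, v) \<in> D}"
  using finite_out_neighbours[of "D\<inverse>" v] by simp

lemma outdeg_mono: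
  assumes "S \<subseteq> D" "finite D"
  shows "outdeg S v \<le> outdeg D v"
  unfolding outdeg_def by (rule card_mono[OF finite_out_neighbours[OF assms(2)]]) (use assms(1) in auto)

lemma outdeg_eq_0:
  assumes "D \<subseteq> V \<times> V" "v \<notin> V"
  shows "outdeg D v = 0"
proof -
  have "{w. (v, w) \<in> D} = {}" using assms by auto
  then show ?thesis unfolding outdeg_def by simp
qed

lemma indeg_eq_0:
  assumes "D \<subseteq> V \<times> V" "v \<notin> V"
  shows "indeg D v = 0"
proof -
  have "{w. (w, v) \<in> D} = {}" using assms by auto
  then show ?thesis unfolding indeg_def by simp
qed

lemma Sigma_out_neighbours: "D \<subseteq> V \<times> V \<Longrightarrow> (SIGMA v:V. {w. (v, w) \<in> D}) = D"
  by auto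

lemma card_eq_sum_outdeg:
  assumes "finite V" "D \<subseteq> V \<times> V"
  shows "card D = (\<Sum>v\<in>V. outdeg D v)"
proof -
  have "finite D" using assms finite_subset by blast
  then have "card (SIGMA v:V. {w. (v, w) \<in> D}) = (\<Sum>v\<in>V. outdeg D v)"
    unfolding outdeg_def using assms(1) by (simp add: finite_out_neighbours)
  then show ?thesis by (simp only: Sigma_out_neighbours[OF assms(2)])
qed

lemma prod_tails_eq_prod_power_outdeg:
  fixes x :: "'a \<Rightarrow> 'r::comm_monoid_mult"
  assumes "finite V" "D \<subseteq> V \<times> V"
  shows "(\<Prod>(u, w)\<in>D. x u) = (\<Prod>v\<in>V. x v ^ outdeg D v)"
proof -
  have "finite D" using assms finite_subset by blast
  then have "(\<Prod>(u, w)\<in>(SIGMA v:V. {w. (v, w) \<in> D}). x u) = (\<Prod>v\<in>V. \<Prod>w\<in>{w. (v, w) \<in> D}. x v)"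
    using assms(1) by (subst prod.Sigma) (auto simp: finite_out_neighbours)
  then show ?thesis unfolding outdeg_def by (simp add: Sigma_out_neighbours[OF assms(2)])
qed

lemma sum_outdeg_orientation:
  assumes "graph V E" "orientation E D"
  shows "(\<Sum>v\<in>V. outdeg D v) = card E"
  using card_eq_sum_outdeg[OF _ orientation_subset[OF assms]] card_orientation[OF assms] assms(1)
  unfolding graph_def by simp

definition reverse_arcs :: "('a \<times> 'a) set \<Rightarrow> ('a \<times> 'a) set \<Rightarrow> ('a \<times> 'a) set" where
  "reverse_arcs D S = (D - S) \<union> S\<inverse>"

lemma orientation_reverse_arcs:
  assumes D: "orientation E D" and "S \<subseteq> D"
  shows "orientation E (reverse_arcs D S)"
  unfolding orientation_def
proof (rule conjI; intro allI impI)
  fix u v assume uv: "(u, v) \<in> reverse_arcs D S"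
  show "{u, v} \<in> E \<and> (v, u) \<notin> reverse_arcs D S"
  proof (cases "(u, v) \<in> D")
    case True
    then show ?thesis
      using uv assms orientation_antisym[OF D] orientation_arc_edge[OF D]
      unfolding reverse_arcs_def by blast
  next
    case False
    then have "(v, u) \<in> S" using uv unfolding reverse_arcs_def by auto
    then have "{v, u} \<in> E" using assms orientation_arc_edge[OF D] by blast
    then show ?thesis
      using \<open>(v, u) \<in> S\<close> False assms(2) unfolding reverse_arcs_def
      by (auto simp: insert_commute)
  qed
next
  fix u v assume "{u, v} \<in> E"
  then show "(u, v) \<in> reverse_arcs D S \<or> (v, u) \<in> reverse_arcs D S"
    using orientation_covers[OF D] unfolding reverse_arcs_def by blast
qed

lemma diff_reverse_arcs: "orientation E D \<Longrightarrow> S \<subseteq> D \<Longrightarrow> D - reverse_arcs D S = S"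
  using orientation_antisym unfolding reverse_arcs_def by fast

lemma reverse_arcs_diff:
  assumes D: "orientation E D" and Q: "orientation E Q"
  shows "reverse_arcs D (D - Q) = Q"
proof -
  have "(v, u) \<in> D \<and> (v, u) \<notin> Q" if "(u, v) \<in> Q" "(u, v) \<notin> D" for u v
    using that orientation_arc_edge[OF Q that(1)] orientation_covers[OF D]
      orientation_antisym[OF Q] by blast
  moreover have "(u, v) \<in> Q" if "(v, u) \<in> D" "(v, u) \<notin> Q" for u v
  proof -
    have "{u, v} \<in> E" using orientation_arc_edge[OF D that(1)] by (simp add: insert_commute)
    then show ?thesis using orientation_covers[OF Q] that(2) by blast
  qed
  ultimately show ?thesis unfolding reverse_arcs_def by auto
qed

lemma outdeg_reverse_arcs:
  assumes "orientation E D" "S \<subseteq> D" "finite D"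
  shows "outdeg (reverse_arcs D S) v + outdeg S v = outdeg D v + indeg S v"
proof -
  have fin: "finite S" using assms finite_subset by blast
  let ?out = "{w. (v, w) \<in> D} - {w. (v, w) \<in> S}"
  have "{w. (v, w) \<in> reverse_arcs D S} = ?out \<union> {w. (w, v) \<in> S}"
    unfolding reverse_arcs_def by auto
  moreover have "?out \<inter> {w. (w, v) \<in> S} = {}"
    using assms orientation_antisym[OF assms(1)] by auto
  ultimately have "outdeg (reverse_arcs D S) v = card ?out + indeg S v"
    unfolding outdeg_def indeg_def
    using finite_out_neighbours[OF assms(3)] finite_in_neighbours[OF fin]
    by (simp add: card_Un_disjoint)
  moreover have "card ?out + outdeg S v = outdeg D v"
  proof -
    have sub: "{w. (v, w) \<in> S} \<subseteq> {w. (v, w) \<in> D}" using assms(2) by auto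
    show ?thesis unfolding outdeg_def
      using card_mono[OF finite_out_neighbours[OF assms(3)] sub]
        card_Diff_subset[OF finite_out_neighbours[OF fin] sub] by simp
  qed
  ultimately show ?thesis by linarith
qed

lemma sign_reverse_arcs:
  assumes "orientation E D" "orientation E R" "S \<subseteq> D" "finite D"
  shows "(-1::int) ^ card (reverse_arcs D S - R) = (-1) ^ card (D - R) * (-1) ^ card S"
proof -
  have fin: "finite S" using assms finite_subset by blast
  have opposite: "(u, v) \<in> R \<longleftrightarrow> (v, u) \<notin> R" if "(v, u) \<in> S" for u v
  proof -
    have "{v, u} \<in> E" using that assms(3) orientation_arc_edge[OF assms(1)] by blast
    then have "{u, v} \<in> E" by (simp add: insert_commute)
    then show ?thesis using orientation_covers[OF assms(2)] orientation_antisym[OF assms(2)] by blast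
  qed
  have "reverse_arcs D S - R = ((D - R) - (S - R)) \<union> (S \<inter> R)\<inverse>"
    unfolding reverse_arcs_def using opposite by auto
  moreover have "((D - R) - (S - R)) \<inter> (S \<inter> R)\<inverse> = {}"
    using assms orientation_antisym[OF assms(1)] by auto
  ultimately have "card (reverse_arcs D S - R) = card ((D - R) - (S - R)) + card (S \<inter> R)"
    using assms fin by (simp add: card_Un_disjoint)
  moreover have "card ((D - R) - (S - R)) + card (S - R) = card (D - R)"
  proof -
    have sub: "S - R \<subseteq> D - R" using assms(3) by blast
    have "finite (S - R)" "finite (D - R)" using fin assms(4) by auto
    then show ?thesis using card_mono[OF _ sub] card_Diff_subset[OF _ sub] by simp
  qed
  moreover have "card S = card (S \<inter> R) + card (S - R)"
    using fin by (metis card_Int_Diff)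
  ultimately have "card (reverse_arcs D S - R) + 2 * card (S - R) = card (D - R) + card S"
    by linarith
  then have "(-1::int) ^ card (reverse_arcs D S - R) * (-1) ^ (2 * card (S - R))
      = (-1) ^ card (D - R) * (-1) ^ card S"
    by (metis power_add)
  then show ?thesis by (simp add: power_mult)
qed

section \<open>Eulerian subgraphs\<close>

definition eulerian_sign_sum :: "('a \<times> 'a) set \<Rightarrow> int" where
  "eulerian_sign_sum D = (\<Sum>S\<in>{S. eulerian_sub D S}. (-1) ^ card S)"

lemma eulerian_sign_sum_eq_0_iff:
  assumes "finite D"
  shows "eulerian_sign_sum D = 0 \<longleftrightarrow>
    card {S. eulerian_sub D S \<and> even (card S)} = card {S. eulerian_sub D S \<and> odd (card S)}"
proof -
  have fin: "finite {S. eulerian_sub D S}"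
    by (rule finite_subset[of _ "Pow D"]) (use assms in \<open>auto simp: eulerian_sub_def\<close>)
  have "{S. eulerian_sub D S} \<inter> {S. even (card S)} = {S. eulerian_sub D S \<and> even (card S)}"
    "{S. eulerian_sub D S} \<inter> - {S. even (card S)} = {S. eulerian_sub D S \<and> odd (card S)}"
    by auto
  then have "eulerian_sign_sum D = int (card {S. eulerian_sub D S \<and> even (card S)})
      - int (card {S. eulerian_sub D S \<and> odd (card S)})"
    unfolding eulerian_sign_sum_def minus_one_power_iff sum.If_cases[OF fin] by simp
  then show ?thesis by simp
qed

definition reorientations :: "'a set set \<Rightarrow> ('a \<times> 'a) set \<Rightarrow> 'a set set \<Rightarrow> ('a \<times> 'a) set set" where
  "reorientations E D F = {Q. orientation E Q \<and> (\<forall>v. outdeg Q v = outdeg D v) \<and>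
     Q - {(u, v). {u, v} \<in> F} = D - {(u, v). {u, v} \<in> F}}"

lemma mem_reorientations_iff:
  assumes graph: "graph V E" and D: "orientation E D" "\<forall>v\<in>V. outdeg D v = d v"
  shows "Q \<in> reorientations E D F \<longleftrightarrow> orientation E Q \<and> (\<forall>v\<in>V. outdeg Q v = d v) \<and>
    Q - {(u, v). {u, v} \<in> F} = D - {(u, v). {u, v} \<in> F}"
proof -
  have "(\<forall>v. outdeg Q v = outdeg D v) \<longleftrightarrow> (\<forall>v\<in>V. outdeg Q v = d v)" if Q: "orientation E Q"
  proof
    assume "\<forall>v. outdeg Q v = outdeg D v"
    then show "\<forall>v\<in>V. outdeg Q v = d v" using D(2) by simp
  next
    assume QV: "\<forall>v\<in>V. outdeg Q v = d v"
    show "\<forall>v. outdeg Q v = outdeg D v"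
    proof
      fix v
      show "outdeg Q v = outdeg D v"
      proof (cases "v \<in> V")
        case True
        then show ?thesis using QV D(2) by simp
      next
        case False
        then show ?thesis
          using outdeg_eq_0[OF orientation_subset[OF graph Q] False]
            outdeg_eq_0[OF orientation_subset[OF graph D(1)] False] by simp
      qed
    qed
  qed
  then show ?thesis unfolding reorientations_def by auto
qed

text \<open>S \<mapsto> reverse_arcs D S is a bijection from the Eulerian subgraphs of D restricted to F
  onto the reorientations, with inverse Q \<mapsto> D - Q.\<close>
lemma sum_sign_reorientations:
  assumes "graph V E" "orientation E D" "orientation E R"
  shows "(\<Sum>Q\<in>reorientations E D F. (-1::int) ^ card (Q - R))
    = (-1) ^ card (D - R) * eulerian_sign_sum (D \<inter> {(u, v). {u, v} \<in> F})"
proof -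
  let ?X = "{(u, v). {u, v} \<in> F}"
  have fin: "finite D" using finite_orientation[OF assms(1,2)] .
  have "(\<Sum>S\<in>{S. eulerian_sub (D \<inter> ?X) S}. (-1::int) ^ card (reverse_arcs D S - R))
      = (\<Sum>Q\<in>reorientations E D F. (-1) ^ card (Q - R))"
  proof (rule sum.reindex_bij_witness[where i="\<lambda>Q. D - Q" and j="reverse_arcs D"])
    fix S assume "S \<in> {S. eulerian_sub (D \<inter> ?X) S}"
    then have S: "S \<subseteq> D" "S \<subseteq> ?X" "\<forall>v. indeg S v = outdeg S v"
      unfolding eulerian_sub_def by auto
    show "D - reverse_arcs D S = S" using diff_reverse_arcs[OF assms(2) S(1)] .
    have "outdeg (reverse_arcs D S) v = outdeg D v" for v
      using outdeg_reverse_arcs[OF assms(2) S(1) fin, of v] S(3) by simp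
    moreover have "reverse_arcs D S - ?X = D - ?X"
      using S(2) unfolding reverse_arcs_def by (auto simp: insert_commute)
    ultimately show "reverse_arcs D S \<in> reorientations E D F"
      unfolding reorientations_def using orientation_reverse_arcs[OF assms(2) S(1)] by auto
  next
    fix Q assume "Q \<in> reorientations E D F"
    then have Q: "orientation E Q" "\<forall>v. outdeg Q v = outdeg D v" "Q - ?X = D - ?X"
      unfolding reorientations_def by auto
    show "reverse_arcs D (D - Q) = Q" using reverse_arcs_diff[OF assms(2) Q(1)] .
    have "indeg (D - Q) v = outdeg (D - Q) v" for v
      using outdeg_reverse_arcs[OF assms(2) _ fin, of "D - Q" v] Q(2)
      unfolding reverse_arcs_diff[OF assms(2) Q(1)] by simp
    moreover have "D - Q \<subseteq> D \<inter> ?X" using Q(3) by blast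
    ultimately show "D - Q \<in> {S. eulerian_sub (D \<inter> ?X) S}" unfolding eulerian_sub_def by auto
  qed simp
  moreover have "(-1::int) ^ card (reverse_arcs D S - R) = (-1) ^ card (D - R) * (-1) ^ card S"
    if "eulerian_sub (D \<inter> ?X) S" for S
    using that sign_reverse_arcs[OF assms(2,3) _ fin] unfolding eulerian_sub_def by blast
  ultimately show ?thesis
    unfolding eulerian_sign_sum_def by (simp add: sum_distrib_left)
qed

section \<open>A Lagrange interpolation identity\<close>

lemma sum_power_div_prod_diff:
  fixes S :: "'a::field set"
  assumes fin: "finite S" and card: "card S = Suc n" and "k \<le> n"
  shows "(\<Sum>s\<in>S. s ^ k / (\<Prod>c\<in>S - {s}. s - c)) = (if k = n then 1 else 0)"
proof -
  define L where "L s = (\<Prod>c\<in>S - {s}. [:- c, 1:])" for s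
  define q where "q = (\<Sum>s\<in>S. smult (s ^ k / (\<Prod>c\<in>S - {s}. s - c)) (L s))"
  have poly_L: "poly (L s) x = (\<Prod>c\<in>S - {s}. x - c)" for s x
    by (simp add: L_def poly_prod)
  have degree_L: "degree (L s) = n" if "s \<in> S" for s
  proof -
    have "degree (L s) = (\<Sum>c\<in>S - {s}. degree [:- c, 1::'a:])"
      unfolding L_def by (rule degree_prod_eq_sum_degree) auto
    also have "\<dots> = n" using card that fin by simp
    finally show ?thesis .
  qed
  have coeff_L: "coeff (L s) n = 1" if "s \<in> S" for s
    using degree_L[OF that] lead_coeff_prod[of "\<lambda>c. [:- c, 1::'a:]" "S - {s}"]
    by (simp add: L_def)
  have "degree q \<le> n"
    unfolding q_def by (rule degree_sum_le) (use fin degree_L order_trans[OF degree_smult_le] in auto)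
  text \<open>q is the interpolation polynomial of x^k on S, which is x^k itself.\<close>
  moreover have "poly q x = x ^ k" if "x \<in> S" for x
  proof -
    have "poly q x = (\<Sum>s\<in>S. s ^ k / (\<Prod>c\<in>S - {s}. s - c) * (\<Prod>c\<in>S - {s}. x - c))"
      unfolding q_def by (simp add: poly_sum poly_L)
    also have "\<dots> = x ^ k / (\<Prod>c\<in>S - {x}. x - c) * (\<Prod>c\<in>S - {x}. x - c)
        + (\<Sum>s\<in>S - {x}. s ^ k / (\<Prod>c\<in>S - {s}. s - c) * (\<Prod>c\<in>S - {s}. x - c))"
      by (rule sum.remove[OF fin that])
    also have "(\<Sum>s\<in>S - {x}. s ^ k / (\<Prod>c\<in>S - {s}. s - c) * (\<Prod>c\<in>S - {s}. x - c)) = 0"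
    proof (rule sum.neutral, intro ballI)
      fix s assume "s \<in> S - {x}"
      then have "(\<Prod>c\<in>S - {s}. x - c) = 0" using fin that by (intro prod_zero) auto
      then show "s ^ k / (\<Prod>c\<in>S - {s}. s - c) * (\<Prod>c\<in>S - {s}. x - c) = 0" by simp
    qed
    moreover have "(\<Prod>c\<in>S - {x}. x - c) \<noteq> 0" using fin by (subst prod_zero_iff) auto
    ultimately show ?thesis by simp
  qed
  ultimately have "monom 1 k = q"
    using card \<open>k \<le> n\<close> by (intro poly_eqI_degree[of S]) (auto simp: poly_monom degree_monom_eq)
  then have "coeff (monom 1 k) n = coeff q n" by simp
  then show ?thesis unfolding q_def by (simp add: coeff_sum coeff_L coeff_monom)
qed

definition lagrange_weight :: "nat \<Rightarrow> nat \<Rightarrow> real" where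
  "lagrange_weight n s = (\<Prod>c\<in>{0..n} - {s}. real s - real c)"

lemma lagrange_weight_nonzero: "s \<le> n \<Longrightarrow> lagrange_weight n s \<noteq> 0"
  unfolding lagrange_weight_def by (subst prod_zero_iff) auto

lemma sum_power_div_lagrange_weight:
  assumes "k \<le> n"
  shows "(\<Sum>s\<in>{0..n}. real s ^ k / lagrange_weight n s) = (if k = n then 1 else 0)"
proof -
  have "lagrange_weight n s = (\<Prod>c\<in>real ` {0..n} - {real s}. real s - c)" for s
  proof -
    have "real ` {0..n} - {real s} = real ` ({0..n} - {s})" by auto
    then show ?thesis unfolding lagrange_weight_def by (simp add: prod.reindex)
  qed
  then have "(\<Sum>s\<in>{0..n}. real s ^ k / lagrange_weight n s)
      = (\<Sum>x\<in>real ` {0..n}. x ^ k / (\<Prod>c\<in>real ` {0..n} - {x}. x - c))"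
    by (simp add: sum.reindex)
  also have "\<dots> = (if k = n then 1 else 0)"
    by (rule sum_power_div_prod_diff) (use assms in \<open>auto simp: card_image\<close>)
  finally show ?thesis .
qed

lemma prod_sum_power_div_lagrange_weight:
  assumes "finite V" "(\<Sum>v\<in>V. a v) = (\<Sum>v\<in>V. d v)"
  shows "(\<Prod>v\<in>V. \<Sum>s\<in>{0..d v}. real s ^ a v / lagrange_weight (d v) s)
    = (if \<forall>v\<in>V. a v = d v then 1 else 0)"
proof (cases "\<forall>v\<in>V. a v = d v")
  case True
  then show ?thesis by (simp add: sum_power_div_lagrange_weight)
next
  case False
  have "\<exists>v\<in>V. a v < d v"
  proof (rule ccontr)
    assume "\<not> (\<exists>v\<in>V. a v < d v)"
    then have "a v = d v" if "v \<in> V" for v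
      using sum_mono_inv[of d V a v] assms that by (simp add: not_less)
    then show False using False by blast
  qed
  then obtain v where "v \<in> V" "a v < d v" by blast
  then have "(\<Sum>s\<in>{0..d v}. real s ^ a v / lagrange_weight (d v) s) = 0"
    by (simp add: sum_power_div_lagrange_weight)
  then have "(\<Prod>v\<in>V. \<Sum>s\<in>{0..d v}. real s ^ a v / lagrange_weight (d v) s) = 0"
    using \<open>v \<in> V\<close> assms(1) by (intro prod_zero) auto
  then show ?thesis using False by simp
qed

section \<open>The graph polynomial\<close>

lemma prod_arc_differences_expand:
  fixes x :: "'a \<Rightarrow> 'r::comm_ring_1"
  assumes graph: "graph V E" and R: "orientation E R"
  shows "(\<Prod>(a, b)\<in>R. x a - x b)
    = (\<Sum>Q\<in>{Q. orientation E Q}. (-1) ^ card (Q - R) * (\<Prod>v\<in>V. x v ^ outdeg Q v))"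
proof -
  have fin: "finite R" using finite_orientation[OF graph R] .
  have "(\<Prod>(a, b)\<in>R. x a - x b)
      = (\<Sum>X\<in>Pow R. (-1) ^ card X * (\<Prod>(a, b)\<in>X. x b) * (\<Prod>(a, b)\<in>R - X. x a))"
    using prod_diff_conv_sum[OF fin, of "\<lambda>p. x (fst p)" "\<lambda>p. x (snd p)"]
    by (simp add: case_prod_beta)
  also have "\<dots> = (\<Sum>Q\<in>{Q. orientation E Q}. (-1) ^ card (Q - R) * (\<Prod>v\<in>V. x v ^ outdeg Q v))"
  proof (rule sum.reindex_bij_witness[where i="\<lambda>Q. R - Q" and j="reverse_arcs R"])
    fix X assume "X \<in> Pow R"
    then have X: "X \<subseteq> R" by simp
    have Q: "orientation E (reverse_arcs R X)" using orientation_reverse_arcs[OF R X] .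
    show "R - reverse_arcs R X = X" using diff_reverse_arcs[OF R X] .
    show "reverse_arcs R X \<in> {Q. orientation E Q}" using Q by simp
    have "X\<inverse> \<inter> (R - X) = {}" using orientation_antisym[OF R] X by auto
    moreover have "(\<Prod>(a, b)\<in>X. x b) = (\<Prod>(a, b)\<in>X\<inverse>. x a)"
    proof -
      have "X\<inverse> = prod.swap ` X" by force
      then show ?thesis by (simp add: prod.reindex case_prod_beta)
    qed
    ultimately have "(\<Prod>(a, b)\<in>X. x b) * (\<Prod>(a, b)\<in>R - X. x a) = (\<Prod>(a, b)\<in>reverse_arcs R X. x a)"
      unfolding reverse_arcs_def using fin X finite_subset
      by (subst prod.union_disjoint) (auto simp: Un_commute)
    also have "\<dots> = (\<Prod>v\<in>V. x v ^ outdeg (reverse_arcs R X) v)"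
      using prod_tails_eq_prod_power_outdeg graph orientation_subset[OF graph Q]
      unfolding graph_def by blast
    moreover have "reverse_arcs R X - R = X\<inverse>"
      using orientation_antisym[OF R] X unfolding reverse_arcs_def by auto
    ultimately show "(-1) ^ card (reverse_arcs R X - R) * (\<Prod>v\<in>V. x v ^ outdeg (reverse_arcs R X) v)
        = (-1) ^ card X * (\<Prod>(a, b)\<in>X. x b) * (\<Prod>(a, b)\<in>R - X. x a)"
      by (simp add: mult.assoc)
  next
    fix Q assume "Q \<in> {Q. orientation E Q}"
    then show "reverse_arcs R (R - Q) = Q" using reverse_arcs_diff[OF R] by simp
  qed auto
  finally show ?thesis .
qed

text \<open>By the expansion above, this is the coefficient of the monomial with exponents d in the
  graph polynomial of R.\<close>
definition graph_poly_coeff :: "'a set set \<Rightarrow> ('a \<times> 'a) set \<Rightarrow> 'a set \<Rightarrow> ('a \<Rightarrow> nat) \<Rightarrow> int" where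
  "graph_poly_coeff E R V d =
     (\<Sum>Q\<in>{Q. orientation E Q \<and> (\<forall>v\<in>V. outdeg Q v = d v)}. (-1) ^ card (Q - R))"

text \<open>The coefficient formula of the Combinatorial Nullstellensatz (Lason; Karasev and Petrov),
  evaluated on the grid of all z with z v \<in> {0..d v}.\<close>
lemma graph_poly_coeff_grid_sum:
  assumes graph: "graph V E" and R: "orientation E R" and d: "(\<Sum>v\<in>V. d v) = card E"
  shows "real_of_int (graph_poly_coeff E R V d) =
    (\<Sum>z\<in>PiE V (\<lambda>v. {0..d v}).
       (\<Prod>(a, b)\<in>R. real (z a) - real (z b)) / (\<Prod>v\<in>V. lagrange_weight (d v) (z v)))"
proof -
  let ?O = "{Q. orientation E Q}"
  let ?P = "PiE V (\<lambda>v. {0..d v})"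
  have finV: "finite V" using graph unfolding graph_def by simp
  have "(\<Sum>z\<in>?P. (\<Prod>(a, b)\<in>R. real (z a) - real (z b)) / (\<Prod>v\<in>V. lagrange_weight (d v) (z v)))
      = (\<Sum>z\<in>?P. \<Sum>Q\<in>?O. (-1) ^ card (Q - R) *
           (\<Prod>v\<in>V. real (z v) ^ outdeg Q v / lagrange_weight (d v) (z v)))"
    by (simp add: prod_arc_differences_expand[OF graph R] sum_divide_distrib prod_dividef)
  also have "\<dots> = (\<Sum>Q\<in>?O. (-1) ^ card (Q - R) *
      (\<Prod>v\<in>V. \<Sum>s\<in>{0..d v}. real s ^ outdeg Q v / lagrange_weight (d v) s))"
    by (subst sum.swap) (simp add: sum_distrib_left prod_sum_PiE[OF finV])
  also have "\<dots> = (\<Sum>Q\<in>?O. if \<forall>v\<in>V. outdeg Q v = d v then (-1) ^ card (Q - R) else 0)"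
    using prod_sum_power_div_lagrange_weight[OF finV] sum_outdeg_orientation[OF graph] d
    by (intro sum.cong) auto
  also have "\<dots> = real_of_int (graph_poly_coeff E R V d)"
    unfolding graph_poly_coeff_def
    by (simp add: sum.inter_filter[OF finite_orientations[OF graph], symmetric] Collect_conj_eq[symmetric])
  finally show ?thesis ..
qed

lemma orientation_restrict:
  assumes D: "orientation E D" and "F \<subseteq> E"
  shows "orientation F (D \<inter> {(u, v). {u, v} \<in> F})"
  unfolding orientation_def
proof (rule conjI; intro allI impI)
  fix u v assume "(u, v) \<in> D \<inter> {(u, v). {u, v} \<in> F}"
  then show "{u, v} \<in> F \<and> (v, u) \<notin> D \<inter> {(u, v). {u, v} \<in> F}"
    using orientation_antisym[OF D] by auto
next
  fix u v assume uv: "{u, v} \<in> F"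
  then have "{v, u} \<in> F" by (simp add: insert_commute)
  moreover have "(u, v) \<in> D \<or> (v, u) \<in> D" using orientation_covers[OF D] uv assms(2) by blast
  ultimately show "(u, v) \<in> D \<inter> {(u, v). {u, v} \<in> F} \<or> (v, u) \<in> D \<inter> {(u, v). {u, v} \<in> F}"
    using uv by auto
qed

text \<open>A nonzero coefficient is inherited by every subgraph F: group the orientations counted by
  the coefficient according to their arcs outside F. Each class consists of the reorientations of
  a representative D, and contributes the Eulerian sign sum of D restricted to F.\<close>
lemma graph_poly_coeff_subgraph_orientation:
  assumes graph: "graph V E" and R: "orientation E R" and "F \<subseteq> E"
    and coeff: "graph_poly_coeff E R V d \<noteq> 0"
  obtains T where "orientation F T" "\<forall>v\<in>V. outdeg T v \<le> d v"
    "card {S. eulerian_sub T S \<and> even (card S)} \<noteq> card {S. eulerian_sub T S \<and> odd (card S)}"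
proof -
  let ?A = "{Q. orientation E Q \<and> (\<forall>v\<in>V. outdeg Q v = d v)}"
  let ?X = "{(u, v). {u, v} \<in> F}"
  have fin: "finite ?A" by (rule finite_subset[OF _ finite_orientations[OF graph]]) blast
  have fibre: "{Q \<in> ?A. Q - ?X = D - ?X} = reorientations E D F" if "D \<in> ?A" for D
  proof -
    have DE: "orientation E D" and Dd: "\<forall>v\<in>V. outdeg D v = d v" using that by simp_all
    show ?thesis by (intro set_eqI) (simp add: mem_reorientations_iff[OF graph DE Dd])
  qed
  have "graph_poly_coeff E R V d = (\<Sum>K\<in>(\<lambda>Q. Q - ?X) ` ?A. \<Sum>Q\<in>{Q \<in> ?A. Q - ?X = K}. (-1) ^ card (Q - R))"
    unfolding graph_poly_coeff_def by (rule sum.image_gen[OF fin, where g = "\<lambda>Q. Q - ?X"])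
  with coeff obtain K where K: "K \<in> (\<lambda>Q. Q - ?X) ` ?A"
    "(\<Sum>Q\<in>{Q \<in> ?A. Q - ?X = K}. (-1::int) ^ card (Q - R)) \<noteq> 0"
    using sum.neutral by force
  from K(1) obtain D where D: "D \<in> ?A" and "K = D - ?X" ..
  then have "(-1) ^ card (D - R) * eulerian_sign_sum (D \<inter> ?X) \<noteq> 0"
    using K(2) sum_sign_reorientations[OF graph _ R, of D F] fibre[OF D] by simp
  then have nonzero: "eulerian_sign_sum (D \<inter> ?X) \<noteq> 0" by simp
  have DE: "orientation E D" using D by simp
  have "finite D" using finite_orientation[OF graph DE] .
  show thesis
  proof (rule that)
    show "orientation F (D \<inter> ?X)" using orientation_restrict[OF DE \<open>F \<subseteq> E\<close>] .
    show "\<forall>v\<in>V. outdeg (D \<inter> ?X) v \<le> d v"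
    proof
      fix v assume "v \<in> V"
      then have "outdeg D v = d v" using D by simp
      then show "outdeg (D \<inter> ?X) v \<le> d v" using outdeg_mono[of "D \<inter> ?X" D v] \<open>finite D\<close> by simp
    qed
    show "card {S. eulerian_sub (D \<inter> ?X) S \<and> even (card S)}
        \<noteq> card {S. eulerian_sub (D \<inter> ?X) S \<and> odd (card S)}"
      using nonzero eulerian_sign_sum_eq_0_iff[of "D \<inter> ?X"] \<open>finite D\<close> by simp
  qed
qed

section \<open>The complete multipartite graph with t parts of size 2\<close>

definition K2t_vertices :: "nat \<Rightarrow> (nat \<times> nat) set" where
  "K2t_vertices t = {0..<t} \<times> {0..<2}"

definition K2t_edges :: "nat \<Rightarrow> (nat \<times> nat) set set" where
  "K2t_edges t = {{p, q} | p q. p \<in> K2t_vertices t \<and> q \<in> K2t_vertices t \<and> fst p \<noteq> fst q}"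

definition K2t_arcs :: "nat \<Rightarrow> ((nat \<times> nat) \<times> (nat \<times> nat)) set" where
  "K2t_arcs t = {(p, q). p \<in> K2t_vertices t \<and> q \<in> K2t_vertices t \<and> fst p < fst q}"

lemma finite_K2t_vertices: "finite (K2t_vertices t)"
  unfolding K2t_vertices_def by simp

lemma card_K2t_vertices: "card (K2t_vertices t) = 2 * t"
  unfolding K2t_vertices_def by (simp add: card_cartesian_product)

lemma graph_K2t: "graph (K2t_vertices t) (K2t_edges t)"
  unfolding graph_def K2t_edges_def using finite_K2t_vertices by auto

lemma K2t_edgeI:
  "p \<in> K2t_vertices t \<Longrightarrow> q \<in> K2t_vertices t \<Longrightarrow> fst p \<noteq> fst q \<Longrightarrow> {p, q} \<in> K2t_edges t"
  unfolding K2t_edges_def by blast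

lemma orientation_K2t_arcs: "orientation (K2t_edges t) (K2t_arcs t)"
  unfolding orientation_def
proof (rule conjI; intro allI impI)
  fix u v assume "(u, v) \<in> K2t_arcs t"
  then show "{u, v} \<in> K2t_edges t \<and> (v, u) \<notin> K2t_arcs t"
    using K2t_edgeI[of u t v] unfolding K2t_arcs_def by auto
next
  fix u v assume "{u, v} \<in> K2t_edges t"
  then obtain p q where "{u, v} = {p, q}" "p \<in> K2t_vertices t" "q \<in> K2t_vertices t" "fst p \<noteq> fst q"
    unfolding K2t_edges_def by blast
  then show "(u, v) \<in> K2t_arcs t \<or> (v, u) \<in> K2t_arcs t"
    unfolding K2t_arcs_def by (auto simp: doubleton_eq_iff)
qed

lemma card_K2t_edges: "card (K2t_edges t) = 2 * t * (t - 1)"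
proof -
  let ?V = "K2t_vertices t" and ?R = "K2t_arcs t"
  have finR: "finite ?R"
    using finite_orientation[OF graph_K2t orientation_K2t_arcs] .
  have "?R \<union> ?R\<inverse> = (SIGMA p:?V. ?V - {fst p} \<times> {0..<2})"
    unfolding K2t_arcs_def K2t_vertices_def by auto
  moreover have "card (?V - {fst p} \<times> {0..<2}) = 2 * t - 2" if "p \<in> ?V" for p
  proof -
    have "{fst p} \<times> {0..<2} \<subseteq> ?V" using that unfolding K2t_vertices_def by auto
    then show ?thesis
      using card_K2t_vertices finite_K2t_vertices by (simp add: card_Diff_subset card_cartesian_product)
  qed
  ultimately have "card (?R \<union> ?R\<inverse>) = 2 * t * (2 * t - 2)"
    using finite_K2t_vertices card_K2t_vertices by (simp add: card_SigmaI)
  moreover have "card (?R \<union> ?R\<inverse>) = 2 * card ?R"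
    using finR by (subst card_Un_disjoint) (auto simp: K2t_arcs_def)
  ultimately have "card ?R = 2 * t * (t - 1)" by (simp add: algebra_simps diff_mult_distrib2)
  then show ?thesis using card_orientation[OF graph_K2t orientation_K2t_arcs] by simp
qed

text \<open>Pigeonhole: the colours of the vertices (j, 0) are distinct and exhaust the t colours, and
  the colour of (i, 1) differs from that of every (j, 0) with j different from i.\<close>
lemma K2t_colouring_constant_on_parts:
  assumes range: "\<forall>v\<in>K2t_vertices t. z v < t"
    and proper: "\<forall>p\<in>K2t_vertices t. \<forall>q\<in>K2t_vertices t. fst p \<noteq> fst q \<longrightarrow> z p \<noteq> z q"
    and "i < t"
  shows "z (i, 1) = z (i, 0)"
proof -
  let ?c = "\<lambda>j. z (j, 0)"
  have "inj_on ?c {..<t}" using proper unfolding inj_on_def K2t_vertices_def by fastforce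
  moreover have "?c ` {..<t} \<subseteq> {..<t}" using range unfolding K2t_vertices_def by auto
  ultimately have "?c ` {..<t} = {..<t}" by (simp add: endo_inj_surj)
  moreover have i1: "(i, 1) \<in> K2t_vertices t" using \<open>i < t\<close> unfolding K2t_vertices_def by simp
  ultimately have "z (i, 1) \<in> ?c ` {..<t}" using range by simp
  then obtain j where "j \<in> {..<t}" and ij: "z (i, 1) = z (j, 0)" by (rule imageE)
  then have j0: "(j, 0) \<in> K2t_vertices t" unfolding K2t_vertices_def by simp
  have "i = j"
  proof (rule ccontr)
    assume "i \<noteq> j"
    then show False using proper[rule_format, OF i1 j0] ij by simp
  qed
  then show ?thesis using ij by simp
qed

lemma prod_pairs_eq_square:
  fixes g :: "nat \<times> nat \<Rightarrow> 'r::comm_semiring_1"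
  assumes "\<forall>i\<in>A. g (i, 1) = g (i, 0)"
  shows "(\<Prod>v\<in>A \<times> {0..<2}. g v) = (\<Prod>i\<in>A. g (i, 0)) ^ 2"
proof -
  have "(\<Prod>v\<in>A \<times> {0..<2}. g v) = (\<Prod>i\<in>A. \<Prod>a\<in>{0..<2}. g (i, a))"
    by (simp add: prod.cartesian_product)
  also have "\<dots> = (\<Prod>i\<in>A. g (i, 0) ^ 2)"
    using assms by (intro prod.cong) (simp_all add: numeral_2_eq_2 power2_eq_square)
  finally show ?thesis by (simp add: prod_power_distrib)
qed

definition K2t_grid_term :: "nat \<Rightarrow> (nat \<times> nat \<Rightarrow> nat) \<Rightarrow> real" where
  "K2t_grid_term t z = (\<Prod>(a, b)\<in>K2t_arcs t. real (z a) - real (z b)) /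
     (\<Prod>v\<in>K2t_vertices t. lagrange_weight (t - 1) (z v))"

text \<open>Only proper colourings contribute, and these are constant on the parts, which turns both
  products into squares.\<close>
lemma K2t_grid_term_nonneg:
  assumes "1 \<le> t" and z: "z \<in> PiE (K2t_vertices t) (\<lambda>_. {0..t - 1})"
  shows "0 \<le> K2t_grid_term t z"
proof (cases "\<forall>p\<in>K2t_vertices t. \<forall>q\<in>K2t_vertices t. fst p \<noteq> fst q \<longrightarrow> z p \<noteq> z q")
  case False
  then obtain p q where pq: "p \<in> K2t_vertices t" "q \<in> K2t_vertices t" "fst p \<noteq> fst q" "z p = z q"
    by blast
  then have "(p, q) \<in> K2t_arcs t \<or> (q, p) \<in> K2t_arcs t" unfolding K2t_arcs_def by auto
  then obtain a b where ab: "(a, b) \<in> K2t_arcs t" "z a = z b" using pq(4) by metis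
  then have "(\<Prod>(a, b)\<in>K2t_arcs t. real (z a) - real (z b)) = 0"
    by (intro prod_zero[OF finite_orientation[OF graph_K2t orientation_K2t_arcs]] bexI[OF _ ab(1)])
      simp
  then show ?thesis unfolding K2t_grid_term_def by simp
next
  case True
  have "z v < t" if "v \<in> K2t_vertices t" for v
    using PiE_mem[OF z that] \<open>1 \<le> t\<close> by simp
  then have parts: "z (i, 1) = z (i, 0)" if "i < t" for i
    using K2t_colouring_constant_on_parts[OF _ True that] by blast
  have "K2t_arcs t = (SIGMA p:K2t_vertices t. {fst p<..<t} \<times> {0..<2})"
    unfolding K2t_arcs_def K2t_vertices_def by auto
  then have "(\<Prod>(a, b)\<in>K2t_arcs t. real (z a) - real (z b))
      = (\<Prod>p\<in>K2t_vertices t. \<Prod>q\<in>{fst p<..<t} \<times> {0..<2}. real (z p) - real (z q))"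
    using finite_K2t_vertices by (simp add: prod.Sigma)
  also have "\<dots> = (\<Prod>p\<in>K2t_vertices t. (\<Prod>j\<in>{fst p<..<t}. real (z p) - real (z (j, 0))) ^ 2)"
    using parts by (intro prod.cong refl prod_pairs_eq_square) auto
  finally have num: "(\<Prod>(a, b)\<in>K2t_arcs t. real (z a) - real (z b))
      = (\<Prod>p\<in>K2t_vertices t. \<Prod>j\<in>{fst p<..<t}. real (z p) - real (z (j, 0))) ^ 2"
    by (simp add: prod_power_distrib)
  have den: "(\<Prod>v\<in>K2t_vertices t. lagrange_weight (t - 1) (z v))
      = (\<Prod>i\<in>{0..<t}. lagrange_weight (t - 1) (z (i, 0))) ^ 2"
    unfolding K2t_vertices_def using parts by (intro prod_pairs_eq_square) auto
  show ?thesis unfolding K2t_grid_term_def num den by simp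
qed

lemma K2t_grid_sum_pos:
  assumes "1 \<le> t"
  shows "0 < (\<Sum>z\<in>PiE (K2t_vertices t) (\<lambda>_. {0..t - 1}). K2t_grid_term t z)"
proof (rule sum_pos2)
  let ?z = "restrict fst (K2t_vertices t)"
  show "finite (PiE (K2t_vertices t) (\<lambda>_. {0..t - 1}))"
    using finite_K2t_vertices by (simp add: finite_PiE)
  show z: "?z \<in> PiE (K2t_vertices t) (\<lambda>_. {0..t - 1})" unfolding K2t_vertices_def by auto
  show "0 \<le> K2t_grid_term t z" if "z \<in> PiE (K2t_vertices t) (\<lambda>_. {0..t - 1})" for z
    using K2t_grid_term_nonneg[OF assms that] .
  have "(\<Prod>(a, b)\<in>K2t_arcs t. real (?z a) - real (?z b)) \<noteq> 0"
    using finite_orientation[OF graph_K2t orientation_K2t_arcs]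
    by (subst prod_zero_iff) (auto simp: K2t_arcs_def)
  moreover have "(\<Prod>v\<in>K2t_vertices t. lagrange_weight (t - 1) (?z v)) \<noteq> 0"
    using finite_K2t_vertices lagrange_weight_nonzero
    by (subst prod_zero_iff) (auto simp: K2t_vertices_def)
  ultimately have "K2t_grid_term t ?z \<noteq> 0" unfolding K2t_grid_term_def by simp
  then show "0 < K2t_grid_term t ?z" using K2t_grid_term_nonneg[OF assms z] by linarith
qed

lemma graph_poly_coeff_K2t_nonzero:
  assumes "1 \<le> t"
  shows "graph_poly_coeff (K2t_edges t) (K2t_arcs t) (K2t_vertices t) (\<lambda>_. t - 1) \<noteq> 0"
proof -
  have "(\<Sum>v\<in>K2t_vertices t. t - 1) = card (K2t_edges t)"
    by (simp add: card_K2t_vertices card_K2t_edges)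
  then show ?thesis
    using graph_poly_coeff_grid_sum[OF graph_K2t orientation_K2t_arcs] K2t_grid_sum_pos[OF assms]
    unfolding K2t_grid_term_def by fastforce
qed

section \<open>Relabelling vertices\<close>

lemma out_neighbours_map_prod:
  assumes inj: "inj_on \<phi> V" and S: "S \<subseteq> V \<times> V" and "v \<in> V"
  shows "{w. (\<phi> v, w) \<in> map_prod \<phi> \<phi> ` S} = \<phi> ` {w. (v, w) \<in> S}"
proof (intro set_eqI iffI)
  fix w assume "w \<in> {w. (\<phi> v, w) \<in> map_prod \<phi> \<phi> ` S}"
  then obtain a b where ab: "(a, b) \<in> S" "\<phi> a = \<phi> v" "w = \<phi> b" by auto
  then have "a = v" using inj S \<open>v \<in> V\<close> by (auto dest: inj_onD)
  then show "w \<in> \<phi> ` {w. (v, w) \<in> S}" using ab by auto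
qed auto

lemma outdeg_map_prod:
  assumes "inj_on \<phi> V" "S \<subseteq> V \<times> V" "v \<in> V"
  shows "outdeg (map_prod \<phi> \<phi> ` S) (\<phi> v) = outdeg S v"
proof -
  have "inj_on \<phi> {w. (v, w) \<in> S}" by (rule inj_on_subset[OF assms(1)]) (use assms(2) in auto)
  then show ?thesis unfolding outdeg_def out_neighbours_map_prod[OF assms] by (rule card_image)
qed

lemma indeg_eq_outdeg_converse: "indeg S v = outdeg (S\<inverse>) v"
  unfolding indeg_def outdeg_def by simp

lemma indeg_map_prod:
  assumes "inj_on \<phi> V" "S \<subseteq> V \<times> V" "v \<in> V"
  shows "indeg (map_prod \<phi> \<phi> ` S) (\<phi> v) = indeg S v"
proof -
  have "(map_prod \<phi> \<phi> ` S)\<inverse> = map_prod \<phi> \<phi> ` (S\<inverse>)" by auto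
  moreover have "S\<inverse> \<subseteq> V \<times> V" using assms(2) by auto
  ultimately show ?thesis
    unfolding indeg_eq_outdeg_converse using outdeg_map_prod[OF assms(1) _ assms(3)] by simp
qed

lemma balanced_map_prod_iff:
  assumes inj: "inj_on \<phi> V" and S: "S \<subseteq> V \<times> V"
  shows "(\<forall>x. indeg (map_prod \<phi> \<phi> ` S) x = outdeg (map_prod \<phi> \<phi> ` S) x)
    \<longleftrightarrow> (\<forall>v. indeg S v = outdeg S v)"
proof -
  have image: "map_prod \<phi> \<phi> ` S \<subseteq> \<phi> ` V \<times> \<phi> ` V" using S by auto
  have "indeg (map_prod \<phi> \<phi> ` S) x = outdeg (map_prod \<phi> \<phi> ` S) x" if "x \<notin> \<phi> ` V" for x
    using outdeg_eq_0[OF image that] indeg_eq_0[OF image that] by simp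
  moreover have "indeg S v = outdeg S v" if "v \<notin> V" for v
    using outdeg_eq_0[OF S that] indeg_eq_0[OF S that] by simp
  ultimately show ?thesis
    using outdeg_map_prod[OF inj S] indeg_map_prod[OF inj S] by (metis imageE)
qed

lemma card_eulerian_sub_map_prod:
  assumes inj: "inj_on \<phi> V" and T: "T \<subseteq> V \<times> V"
  shows "card {S. eulerian_sub (map_prod \<phi> \<phi> ` T) S \<and> P (card S)}
    = card {S. eulerian_sub T S \<and> P (card S)}"
proof -
  let ?h = "map_prod \<phi> \<phi>"
  let ?E = "{S. eulerian_sub T S \<and> P (card S)}"
  have inj_h: "inj_on ?h (V \<times> V)" using map_prod_inj_on[OF inj inj] .
  have card_h: "card (?h ` S) = card S" if "S \<subseteq> V \<times> V" for S
    using card_image[OF inj_on_subset[OF inj_h that]] .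
  have "{S. eulerian_sub (?h ` T) S \<and> P (card S)} = (`) ?h ` ?E"
  proof (intro set_eqI iffI)
    fix S' assume S': "S' \<in> {S. eulerian_sub (?h ` T) S \<and> P (card S)}"
    then obtain S where "S \<subseteq> T" "S' = ?h ` S" unfolding eulerian_sub_def by (auto simp: subset_image_iff)
    moreover have "S \<subseteq> V \<times> V" using \<open>S \<subseteq> T\<close> T by blast
    ultimately show "S' \<in> (`) ?h ` ?E"
      using S' balanced_map_prod_iff[OF inj] card_h unfolding eulerian_sub_def by auto
  next
    fix S' assume "S' \<in> (`) ?h ` ?E"
    then obtain S where S: "S \<in> ?E" "S' = ?h ` S" by blast
    then have "S \<subseteq> V \<times> V" using T unfolding eulerian_sub_def by blast
    then show "S' \<in> {S. eulerian_sub (?h ` T) S \<and> P (card S)}"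
      using S balanced_map_prod_iff[OF inj] card_h unfolding eulerian_sub_def by auto
  qed
  moreover have "inj_on ((`) ?h) ?E"
    by (rule inj_on_subset[OF inj_on_image_Pow[OF inj_h]]) (use T in \<open>auto simp: eulerian_sub_def\<close>)
  ultimately show ?thesis by (simp add: card_image)
qed

lemma map_prod_pullback_orientation:
  assumes graph: "graph V E" and T: "orientation ((`) \<phi> ` E) T"
  shows "map_prod \<phi> \<phi> ` {(u, v). u \<in> V \<and> v \<in> V \<and> (\<phi> u, \<phi> v) \<in> T} = T"
proof -
  have "T \<subseteq> \<phi> ` V \<times> \<phi> ` V"
  proof
    fix p assume "p \<in> T"
    obtain x y where p: "p = (x, y)" by (cases p)
    then have "{x, y} \<in> (`) \<phi> ` E" using orientation_arc_edge[OF T] \<open>p \<in> T\<close> by simp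
    then obtain e where "{x, y} = \<phi> ` e" "e \<in> E" by (rule imageE)
    then have "{x, y} \<subseteq> \<phi> ` V" using graph_edge_subset[OF graph] by (simp add: image_mono)
    then show "p \<in> \<phi> ` V \<times> \<phi> ` V" using p by simp
  qed
  then show ?thesis by auto
qed

lemma orientation_pullback:
  assumes graph: "graph V E" and inj: "inj_on \<phi> V" and T: "orientation ((`) \<phi> ` E) T"
  shows "orientation E {(u, v). u \<in> V \<and> v \<in> V \<and> (\<phi> u, \<phi> v) \<in> T}"
  unfolding orientation_def
proof (rule conjI; intro allI impI)
  fix u v assume "(u, v) \<in> {(u, v). u \<in> V \<and> v \<in> V \<and> (\<phi> u, \<phi> v) \<in> T}"
  then have uv: "u \<in> V" "v \<in> V" "(\<phi> u, \<phi> v) \<in> T" by auto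
  then have "{\<phi> u, \<phi> v} \<in> (`) \<phi> ` E" using orientation_arc_edge[OF T] by blast
  then obtain e where e: "\<phi> ` {u, v} = \<phi> ` e" "e \<in> E" by (auto elim: imageE)
  then have "{u, v} = e"
    using inj_on_image_eq_iff[OF inj, of "{u, v}" e] uv graph_edge_subset[OF graph] by simp
  then have "{u, v} \<in> E" using e(2) by simp
  moreover have "(\<phi> v, \<phi> u) \<notin> T" using orientation_antisym[OF T uv(3)] .
  ultimately show "{u, v} \<in> E \<and> (v, u) \<notin> {(u, v). u \<in> V \<and> v \<in> V \<and> (\<phi> u, \<phi> v) \<in> T}"
    by simp
next
  fix u v assume uv: "{u, v} \<in> E"
  then have "{\<phi> u, \<phi> v} \<in> (`) \<phi> ` E" using image_eqI[of "{\<phi> u, \<phi> v}" "(`) \<phi>" "{u, v}" E] by simp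
  then have "(\<phi> u, \<phi> v) \<in> T \<or> (\<phi> v, \<phi> u) \<in> T" using orientation_covers[OF T] by blast
  then show "(u, v) \<in> {(u, v). u \<in> V \<and> v \<in> V \<and> (\<phi> u, \<phi> v) \<in> T} \<or>
      (v, u) \<in> {(u, v). u \<in> V \<and> v \<in> V \<and> (\<phi> u, \<phi> v) \<in> T}"
    using graph_edgeD[OF graph uv] by auto
qed

lemma f_AT_of_image_orientation:
  assumes graph: "graph V E" and inj: "inj_on \<phi> V"
    and T: "orientation ((`) \<phi> ` E) T" and deg: "\<forall>v\<in>V. int (outdeg T (\<phi> v)) < f v"
    and parity: "card {S. eulerian_sub T S \<and> even (card S)} \<noteq> card {S. eulerian_sub T S \<and> odd (card S)}"
  shows "f_AT V E f"
proof -
  define T' where "T' = {(u, v). u \<in> V \<and> v \<in> V \<and> (\<phi> u, \<phi> v) \<in> T}"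
  have T'V: "T' \<subseteq> V \<times> V" unfolding T'_def by auto
  have TT': "T = map_prod \<phi> \<phi> ` T'"
    unfolding T'_def using map_prod_pullback_orientation[OF graph T] by simp
  have "orientation E T'" unfolding T'_def using orientation_pullback[OF graph inj T] .
  moreover have "outdeg T' v = outdeg T (\<phi> v)" if "v \<in> V" for v
    using outdeg_map_prod[OF inj T'V that] TT' by simp
  moreover have "card {S. eulerian_sub T' S \<and> even (card S)} = card {S. eulerian_sub T S \<and> even (card S)}"
    "card {S. eulerian_sub T' S \<and> odd (card S)} = card {S. eulerian_sub T S \<and> odd (card S)}"
    using card_eulerian_sub_map_prod[OF inj T'V, where P = even]
      card_eulerian_sub_map_prod[OF inj T'V, where P = odd] TT' by simp_all
  ultimately have "AT_orientation V E f T'"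
    unfolding AT_orientation_def using deg parity by auto
  then show ?thesis unfolding f_AT_def by blast
qed

lemma subgraph_K2t_f_AT:
  assumes graph: "graph V E" and "1 \<le> t" and "subgraph_K2t V E t"
  shows "f_AT V E (\<lambda>_. int t)"
proof -
  obtain \<phi> :: "'a \<Rightarrow> nat \<times> nat" where inj: "inj_on \<phi> V"
    and range: "\<phi> ` V \<subseteq> K2t_vertices t"
    and parts: "\<forall>u v. {u, v} \<in> E \<longrightarrow> fst (\<phi> u) \<noteq> fst (\<phi> v)"
    using assms(3) unfolding subgraph_K2t_def K2t_vertices_def by blast
  have "(`) \<phi> ` E \<subseteq> K2t_edges t"
  proof
    fix e' assume "e' \<in> (`) \<phi> ` E"
    then obtain e where "e' = \<phi> ` e" "e \<in> E" by (rule imageE)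
    moreover obtain u v where "e = {u, v}" using \<open>e \<in> E\<close> graph unfolding graph_def by blast
    ultimately have "e' = {\<phi> u, \<phi> v}" "{u, v} \<in> E" by auto
    moreover have "\<phi> u \<in> K2t_vertices t" "\<phi> v \<in> K2t_vertices t"
      using range graph_edgeD[OF graph \<open>{u, v} \<in> E\<close>] by auto
    ultimately show "e' \<in> K2t_edges t" using K2t_edgeI parts by simp
  qed
  then obtain T where T: "orientation ((`) \<phi> ` E) T"
    and deg: "\<forall>w\<in>K2t_vertices t. outdeg T w \<le> t - 1"
    and parity: "card {S. eulerian_sub T S \<and> even (card S)} \<noteq> card {S. eulerian_sub T S \<and> odd (card S)}"
    by (rule graph_poly_coeff_subgraph_orientation[OF graph_K2t orientation_K2t_arcs _
          graph_poly_coeff_K2t_nonzero[OF \<open>1 \<le> t\<close>]])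
  have "\<forall>v\<in>V. int (outdeg T (\<phi> v)) < int t"
  proof
    fix v assume "v \<in> V"
    then have "\<phi> v \<in> K2t_vertices t" by (intro subsetD[OF range] imageI)
    then have "outdeg T (\<phi> v) \<le> t - 1" using deg by simp
    then show "int (outdeg T (\<phi> v)) < int t" using \<open>1 \<le> t\<close> by linarith
  qed
  then show ?thesis by (intro f_AT_of_image_orientation[OF graph inj T _ parity]) simp
qed

lemma BK_free_not_subgraph_K2t:
  assumes graph: "graph V E" and BK: "BK_free V E"
  shows "\<not> subgraph_K2t V E (maxdeg V E - 1)"
proof
  let ?t = "maxdeg V E - 1"
  assume sub: "subgraph_K2t V E ?t"
  have "V \<noteq> {}" using BK unfolding BK_free_def connected_graph_def by simp
  then have "1 \<le> ?t" using sub unfolding subgraph_K2t_def by (cases "?t = 0") auto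
  have induced: "induced_edges E V = E" using graph unfolding induced_edges_def graph_def by auto
  have "(\<lambda>v. int (Defs.degree (induced_edges E V) v) - 1 + int (maxdeg V E) - int (Defs.degree E v))
      = (\<lambda>_. int ?t)"
    using \<open>1 \<le> ?t\<close> unfolding induced by auto
  then have "\<exists>W. W \<subseteq> V \<and> W \<noteq> {} \<and>
      (let EH = induced_edges E W;
           fH = (\<lambda>v. int (Defs.degree EH v) - 1 + int (maxdeg V E) - int (Defs.degree E v))
       in f_AT W EH fH \<or> f_KP W EH fH)"
    using subgraph_K2t_f_AT[OF graph \<open>1 \<le> ?t\<close> sub] induced \<open>V \<noteq> {}\<close>
    by (intro exI[of _ V]) (simp add: Let_def)
  then show False using BK unfolding BK_free_def by blast
qed

theorem mainTheorem3:
  fixes V :: "'a set" and E :: "'a set set" and t :: nat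
  assumes "graph V E"
  shows "(1 \<le> t \<and> subgraph_K2t V E t \<longrightarrow> f_AT V E (\<lambda>_. int t)) \<and>
         (BK_free V E \<longrightarrow> \<not> subgraph_K2t V E (maxdeg V E - 1))"
  using subgraph_K2t_f_AT[OF assms] BK_free_not_subgraph_K2t[OF assms] by blast

end
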